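(* Let $d\ge2$ be an integer, let $\lambda,D_1,\dots,D_d$ be real constants and $D=\sum_{i=1}^dD_i$. There exists $L=(L_1,\dots,L_d)\in C^1([0,1];\mathbb{R}^d)$ satisfying $$L_i'=-\Big(\sum_{k=1}^dL_k\Big)L_i-\lambda\ \text{ on }[0,1]\quad\text{and}\quad\int_0^1L_i(r)\,dr=D_i\qquad(i=1,\dots,d)$$ if and only if $\lambda<\pi^2/d$. Moreover, such a solution is unique. *)

theory Defs
  imports "HOL-Analysis.Analysis"
begin

definition C1_01 :: "(real \<Rightarrow> real) \<Rightarrow> bool" where
  "C1_01 f \<longleftrightarrow> (\<exists>f'. continuous_on {0..1} f' \<and>
      (\<forall>r\<in>{0..1}. (f has_real_derivative f' r) (at r within {0..1})))"

definition is_sol :: "nat \<Rightarrow> real \<Rightarrow> (nat \<Rightarrow> real) \<Rightarrow> (nat \<Rightarrow> real \<Rightarrow> real) \<Rightarrow> bool" where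
  "is_sol d lam D L \<longleftrightarrow>
     (\<forall>i<d. C1_01 (L i) \<and>
        (\<forall>r\<in>{0..1}. (L i has_real_derivative
              (- (\<Sum>k<d. L k r) * L i r - lam)) (at r within {0..1})) \<and>
        (L i has_integral D i) {0..1})"

end

theory Submission
  imports Defs
begin

text \<open>The sum \<open>S = L\<^sub>1 + \<dots> + L\<^sub>d\<close> solves the Riccati equation
\<open>S' = -S\<^sup>2 - \<mu>\<close> with \<open>\<mu> = d \<lambda>\<close> and has integral \<open>D\<close>.
If \<open>\<mu> \<ge> \<pi>\<^sup>2\<close>, the function \<open>arctan (S/\<pi>) + \<pi> r\<close> is nonincreasing on [0,1],
yet its increment over [0,1] is \<open>\<pi>\<close> plus an increment of \<open>arctan\<close>, which exceeds \<open>-\<pi>\<close>.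
If \<open>\<mu> < \<pi>\<^sup>2\<close>, the sine-like solution of \<open>u'' = -\<mu> u\<close> vanishing at 0 is positive
on (0,1]; combined with its reflection it gives a solution positive on [0,1] with
\<open>u(1) = e\<^sup>D u(0)\<close>. Then \<open>S = u'/u\<close> has integral \<open>D\<close>, and \<open>L\<^sub>i = S/d + B\<^sub>i/u\<close>,
with constants \<open>B\<^sub>i\<close> summing to 0 fitted to the integrals \<open>D\<^sub>i\<close>, solves the system.
For uniqueness, the difference \<open>w\<close> of two solutions (first of the sums, then of the
components) satisfies a linear equation \<open>w' = -q w\<close>, so \<open>w e\<^sup>\<integral>\<^sup>q\<close> is constant,
and a vanishing integral forces \<open>w = 0\<close>.\<close>

lemma has_integral_pos:
  fixes f :: "real \<Rightarrow> real"
  assumes "a < b" "continuous_on {a..b} f" "\<And>x. x \<in> {a..b} \<Longrightarrow> f x > 0"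
    and "(f has_integral I) {a..b}"
  shows "I > 0"
proof -
  obtain x0 where x0: "x0 \<in> {a..b}" and min: "\<And>y. y \<in> {a..b} \<Longrightarrow> f x0 \<le> f y"
    using continuous_attains_inf[of "{a..b}" f] assms(1,2) by auto
  have "((\<lambda>x. f x0) has_integral (b - a) * f x0) {a..b}"
    using has_integral_const_real[of "f x0" a b] assms(1) by simp
  then have "(b - a) * f x0 \<le> I"
    using has_integral_le[OF _ assms(4)] min by blast
  moreover have "(b - a) * f x0 > 0"
    using assms(1,3) x0 by simp
  ultimately show ?thesis by linarith
qed

lemma linear_ode_zero_integral_imp_zero:
  fixes w q :: "real \<Rightarrow> real"
  assumes "a < b" and q: "continuous_on {a..b} q"
    and w': "\<And>r. r \<in> {a..b} \<Longrightarrow> (w has_real_derivative - q r * w r) (at r within {a..b})"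
    and w_int: "(w has_integral 0) {a..b}"
  shows "\<forall>r\<in>{a..b}. w r = 0"
proof -
  define P where "P x = integral {a..x} q" for x
  have P': "(P has_real_derivative q r) (at r within {a..b})" if "r \<in> {a..b}" for r
    unfolding P_def[abs_def] using integral_has_real_derivative[OF q that] .
  have "((\<lambda>x. w x * exp (P x)) has_real_derivative 0) (at r within {a..b})"
    if r: "r \<in> {a..b}" for r
  proof -
    have "((\<lambda>x. w x * exp (P x)) has_real_derivative
        w r * (exp (P r) * q r) + - q r * w r * exp (P r)) (at r within {a..b})"
      using w'[OF r] P'[OF r] by (intro DERIV_mult' DERIV_chain2[OF DERIV_exp])
    then show ?thesis
      by (simp add: algebra_simps)
  qed
  then obtain K where K: "\<forall>x\<in>{a..b}. w x * exp (P x) = K"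
    using has_field_derivative_zero_constant[OF convex_real_interval(5)] by blast
  have w: "w x = K * exp (- P x)" if "x \<in> {a..b}" for x
    using K that by (simp add: exp_minus field_simps)
  have exp_cont: "continuous_on {a..b} (\<lambda>x. exp (- P x))"
    using DERIV_continuous_on[OF P'] by (intro continuous_intros)
  then obtain J where J: "((\<lambda>x. exp (- P x)) has_integral J) {a..b}"
    using integrable_continuous_interval by blast
  have "J > 0"
    using has_integral_pos[OF \<open>a < b\<close> exp_cont _ J] by simp
  have "((\<lambda>x. K * exp (- P x)) has_integral K * J) {a..b}"
    using has_integral_mult_right[OF J] .
  then have "(w has_integral K * J) {a..b}"
    using has_integral_cong[of "{a..b}" w "\<lambda>x. K * exp (- P x)"] w by blast
  then have "K * J = 0"
    using has_integral_unique w_int by blast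
  with \<open>J > 0\<close> show ?thesis
    using w by simp
qed

lemma riccati_no_solution_on_unit_interval:
  fixes S :: "real \<Rightarrow> real"
  assumes "mu \<ge> pi\<^sup>2"
    and S': "\<And>r. r \<in> {0..1} \<Longrightarrow> (S has_real_derivative - (S r)\<^sup>2 - mu) (at r within {0..1})"
  shows False
proof -
  define f where "f x = arctan (S x / pi) + pi * x" for x
  have "continuous_on {0..1} f"
    unfolding f_def[abs_def] using DERIV_continuous_on[OF S'] by (intro continuous_intros) auto
  then have "f 1 \<le> f 0"
  proof (rule DERIV_nonpos_imp_decreasing_open[of 0 1 f, rotated 2])
    fix x :: real assume x: "0 < x" "x < 1"
    have S'_at: "(S has_real_derivative - (S x)\<^sup>2 - mu) (at x)"
      using S'[of x] x at_within_Icc_at[of 0 x 1] by simp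
    have "(f has_real_derivative
        inverse (1 + (S x / pi)\<^sup>2) * ((- (S x)\<^sup>2 - mu) / pi) + pi) (at x)"
      unfolding f_def[abs_def] by (rule derivative_eq_intros S'_at refl | simp)+
    moreover have "inverse (1 + (S x / pi)\<^sup>2) * ((- (S x)\<^sup>2 - mu) / pi) + pi \<le> 0"
    proof -
      define t where "t = 1 + (S x / pi)\<^sup>2"
      have "t > 0"
        by (simp add: t_def add_pos_nonneg)
      have "(- (S x)\<^sup>2 - mu) / pi \<le> - pi * t"
        using \<open>mu \<ge> pi\<^sup>2\<close> by (simp add: t_def field_simps power2_eq_square)
      then have "inverse t * ((- (S x)\<^sup>2 - mu) / pi) \<le> inverse t * (- pi * t)"
        using \<open>t > 0\<close> by (intro mult_left_mono) auto
      also have "\<dots> = - pi"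
        using \<open>t > 0\<close> by simp
      finally show ?thesis
        unfolding t_def by linarith
    qed
    ultimately show "\<exists>y. (f has_real_derivative y) (at x) \<and> y \<le> 0"
      by auto
  qed simp
  moreover have "- pi / 2 < arctan (S 1 / pi)" "arctan (S 0 / pi) < pi / 2"
    using arctan_bounded by auto
  ultimately show False
    unfolding f_def by simp
qed

lemma is_sol_sum_riccati:
  assumes "is_sol d lam D L" "r \<in> {0..1}"
  shows "((\<lambda>r. \<Sum>k<d. L k r) has_real_derivative - (\<Sum>k<d. L k r)\<^sup>2 - real d * lam)
    (at r within {0..1})"
proof -
  have "((\<lambda>r. \<Sum>k<d. L k r) has_real_derivative (\<Sum>i<d. - (\<Sum>k<d. L k r) * L i r - lam))
      (at r within {0..1})"
    using assms unfolding is_sol_def by (intro DERIV_sum) auto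
  then show ?thesis
    by (simp add: sum_subtractf sum_negf sum_distrib_left[symmetric] power2_eq_square)
qed

lemma is_sol_sum_integral:
  assumes "is_sol d lam D L"
  shows "((\<lambda>r. \<Sum>k<d. L k r) has_integral (\<Sum>k<d. D k)) {0..1}"
  using assms unfolding is_sol_def by (intro has_integral_sum) auto

lemma is_sol_imp_less_pi_squared:
  assumes "is_sol d lam D L"
  shows "real d * lam < pi\<^sup>2"
proof (rule ccontr)
  assume "\<not> real d * lam < pi\<^sup>2"
  then show False
    using riccati_no_solution_on_unit_interval[OF _ is_sol_sum_riccati[OF assms]] by simp
qed

lemma is_sol_unique:
  assumes L1: "is_sol d lam D L1" and L2: "is_sol d lam D L2" and "i < d" "r \<in> {0..1}"
  shows "L1 i r = L2 i r"
proof -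
  define S1 where "S1 r = (\<Sum>k<d. L1 k r)" for r
  define S2 where "S2 r = (\<Sum>k<d. L2 k r)" for r
  note S1' = is_sol_sum_riccati[OF L1, folded S1_def]
  note S2' = is_sol_sum_riccati[OF L2, folded S2_def]
  have "\<forall>r\<in>{0..1}. S1 r - S2 r = 0"
  proof (rule linear_ode_zero_integral_imp_zero[where q="\<lambda>r. S1 r + S2 r"])
    show "continuous_on {0..1} (\<lambda>r. S1 r + S2 r)"
      using DERIV_continuous_on[OF S1'] DERIV_continuous_on[OF S2'] by (intro continuous_intros)
    show "((\<lambda>r. S1 r - S2 r) has_real_derivative - (S1 r + S2 r) * (S1 r - S2 r))
        (at r within {0..1})" if "r \<in> {0..1}" for r
      using DERIV_diff[OF S1'[OF that] S2'[OF that]] by (simp add: algebra_simps power2_eq_square)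
    show "((\<lambda>r. S1 r - S2 r) has_integral 0) {0..1}"
      using has_integral_diff[OF is_sol_sum_integral[OF L1] is_sol_sum_integral[OF L2]]
      by (simp add: S1_def S2_def)
  qed simp
  then have S: "S2 r = S1 r" if "r \<in> {0..1}" for r
    using that by simp
  have "\<forall>r\<in>{0..1}. L1 i r - L2 i r = 0"
  proof (rule linear_ode_zero_integral_imp_zero[where q=S1])
    show "continuous_on {0..1} S1"
      using DERIV_continuous_on[OF S1'] .
    show "((\<lambda>r. L1 i r - L2 i r) has_real_derivative - S1 r * (L1 i r - L2 i r))
        (at r within {0..1})" if "r \<in> {0..1}" for r
    proof -
      have "((\<lambda>r. L1 i r - L2 i r) has_real_derivative
          (- S1 r * L1 i r - lam) - (- S2 r * L2 i r - lam)) (at r within {0..1})"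
        using L1 L2 \<open>i < d\<close> that unfolding is_sol_def S1_def S2_def
        by (intro DERIV_diff) auto
      then show ?thesis
        using S[OF that] by (simp add: algebra_simps)
    qed
    show "((\<lambda>r. L1 i r - L2 i r) has_integral 0) {0..1}"
      using L1 L2 \<open>i < d\<close> unfolding is_sol_def by (metis has_integral_diff diff_self)
  qed simp
  then show ?thesis
    using \<open>r \<in> {0..1}\<close> by simp
qed

lemma oscillator_sine_solution:
  assumes "mu < pi\<^sup>2"
  obtains s c where "\<And>r. (s has_real_derivative c r) (at r)"
    and "\<And>r. (c has_real_derivative - mu * s r) (at r)"
    and "s 0 = 0" and "\<And>r. r \<in> {0<..1} \<Longrightarrow> s r > 0"
proof -
  consider "mu > 0" | "mu = 0" | "mu < 0"
    by linarith
  then show ?thesis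
  proof cases
    case 1
    define k where "k = sqrt mu"
    have "k > 0" "k * k = mu"
      using 1 by (simp_all add: k_def)
    have "k < pi"
      using real_sqrt_less_mono[OF assms] by (simp add: k_def)
    show ?thesis
    proof (rule that[of "\<lambda>r. sin (k * r) / k" "\<lambda>r. cos (k * r)"])
      show "((\<lambda>r. sin (k * r) / k) has_real_derivative cos (k * r)) (at r)" for r
        using \<open>k > 0\<close> by (auto intro!: derivative_eq_intros)
      show "((\<lambda>r. cos (k * r)) has_real_derivative - mu * (sin (k * r) / k)) (at r)" for r
        using \<open>k > 0\<close>
        by (auto intro!: derivative_eq_intros simp: \<open>k * k = mu\<close>[symmetric])
      show "sin (k * r) / k > 0" if "r \<in> {0<..1}" for r
      proof -
        have "k * r \<le> k"
          using that \<open>k > 0\<close> by (simp add: mult_left_le)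
        then have "k * r < pi"
          using \<open>k < pi\<close> by linarith
        then show ?thesis
          using that \<open>k > 0\<close> by (intro divide_pos_pos sin_gt_zero) auto
      qed
    qed simp
  next
    case 2
    show ?thesis
      by (rule that[of "\<lambda>r. r" "\<lambda>r. 1"]) (auto simp: 2 intro!: derivative_eq_intros)
  next
    case 3
    define k where "k = sqrt (- mu)"
    have "k > 0" "k * k = - mu"
      using 3 by (simp_all add: k_def)
    show ?thesis
    proof (rule that[of "\<lambda>r. sinh (k * r) / k" "\<lambda>r. cosh (k * r)"])
      show "((\<lambda>r. sinh (k * r) / k) has_real_derivative cosh (k * r)) (at r)" for r
        using \<open>k > 0\<close> by (auto intro!: derivative_eq_intros)
      show "((\<lambda>r. cosh (k * r)) has_real_derivative - mu * (sinh (k * r) / k)) (at r)" for r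
        using \<open>k > 0\<close>
        by (auto intro!: derivative_eq_intros simp: \<open>k * k = - mu\<close>[symmetric])
      show "sinh (k * r) / k > 0" if "r \<in> {0<..1}" for r
        using that \<open>k > 0\<close> by simp
    qed simp
  qed
qed

lemma oscillator_positive_solution:
  assumes "mu < pi\<^sup>2" "q > 0"
  obtains u u' where "\<And>r. (u has_real_derivative u' r) (at r)"
    and "\<And>r. (u' has_real_derivative - mu * u r) (at r)"
    and "\<And>r. r \<in> {0..1} \<Longrightarrow> u r > 0" and "u 1 = q * u 0"
proof -
  obtain s c where s': "\<And>r. (s has_real_derivative c r) (at r)"
    and c': "\<And>r. (c has_real_derivative - mu * s r) (at r)"
    and "s 0 = 0" and s_pos: "\<And>r. r \<in> {0<..1} \<Longrightarrow> s r > 0"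
    using oscillator_sine_solution[OF assms(1)] by blast
  have reflect: "((\<lambda>r. f (1 - r)) has_real_derivative - f' (1 - r)) (at r)"
    if "\<And>r. (f has_real_derivative f' r) (at r)" for f f' :: "real \<Rightarrow> real" and r
    using DERIV_chain2[OF that DERIV_diff[OF DERIV_const[of 1] DERIV_ident]] by simp
  show ?thesis
  proof (rule that[of "\<lambda>r. s (1 - r) + q * s r" "\<lambda>r. - c (1 - r) + q * c r"])
    show "((\<lambda>r. s (1 - r) + q * s r) has_real_derivative - c (1 - r) + q * c r) (at r)" for r
      using reflect[OF s'] DERIV_cmult[OF s'] by (rule DERIV_add)
    show "((\<lambda>r. - c (1 - r) + q * c r) has_real_derivative
        - mu * (s (1 - r) + q * s r)) (at r)" for r
    proof -
      have "((\<lambda>r. - c (1 - r) + q * c r) has_real_derivative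
          - (- (- mu * s (1 - r))) + q * (- mu * s r)) (at r)"
        using reflect[OF c'] DERIV_cmult[OF c'] by (intro DERIV_add DERIV_minus)
      then show ?thesis
        by (simp add: algebra_simps)
    qed
    show "s (1 - r) + q * s r > 0" if "r \<in> {0..1}" for r
    proof -
      have "s r \<ge> 0" "s (1 - r) \<ge> 0"
        using that s_pos[of r] s_pos[of "1 - r"] \<open>s 0 = 0\<close>
        by (cases "r = 0"; cases "r = 1"; auto)+
      moreover have "s r > 0 \<or> s (1 - r) > 0"
        using that s_pos[of r] s_pos[of "1 - r"] by (cases "r = 0") auto
      ultimately show ?thesis
        using \<open>q > 0\<close> by (auto intro: add_pos_nonneg add_nonneg_pos)
    qed
  qed (simp add: \<open>s 0 = 0\<close>)
qed

lemma riccati_solution_with_integral: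
  assumes "mu < pi\<^sup>2"
  obtains S v :: "real \<Rightarrow> real" where
    "\<And>r. r \<in> {0..1} \<Longrightarrow> (S has_real_derivative - (S r)\<^sup>2 - mu) (at r within {0..1})"
    and "\<And>r. r \<in> {0..1} \<Longrightarrow> (v has_real_derivative - S r * v r) (at r within {0..1})"
    and "\<And>r. r \<in> {0..1} \<Longrightarrow> v r > 0"
    and "(S has_integral I) {0..1}"
proof -
  obtain u u' where u': "\<And>r. (u has_real_derivative u' r) (at r)"
    and u'': "\<And>r. (u' has_real_derivative - mu * u r) (at r)"
    and u_pos: "\<And>r. r \<in> {0..1} \<Longrightarrow> u r > 0" and "u 1 = exp I * u 0"
    using oscillator_positive_solution[OF assms exp_gt_zero] by blast
  show ?thesis
  proof (rule that[of "\<lambda>r. u' r / u r" "\<lambda>r. 1 / u r"])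
    fix r :: real assume r: "r \<in> {0..1}"
    have "((\<lambda>r. u' r / u r) has_real_derivative
        ((- mu * u r) * u r - u' r * u' r) / (u r * u r)) (at r within {0..1})"
      using u_pos[OF r]
      by (intro DERIV_divide has_field_derivative_at_within[OF u']
          has_field_derivative_at_within[OF u'']) auto
    moreover have "((- mu * u r) * u r - u' r * u' r) / (u r * u r) = - (u' r / u r)\<^sup>2 - mu"
      using u_pos[OF r] by (simp add: field_simps power2_eq_square)
    ultimately show "((\<lambda>r. u' r / u r) has_real_derivative - (u' r / u r)\<^sup>2 - mu)
        (at r within {0..1})"
      by simp
    have "((\<lambda>r. 1 / u r) has_real_derivative (0 * u r - 1 * u' r) / (u r * u r))
        (at r within {0..1})"
      using u_pos[OF r]
      by (intro DERIV_divide has_field_derivative_at_within[OF u'] DERIV_const) auto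
    then show "((\<lambda>r. 1 / u r) has_real_derivative - (u' r / u r) * (1 / u r))
        (at r within {0..1})"
      by simp
    show "1 / u r > 0"
      using u_pos[OF r] by simp
  next
    have "((\<lambda>r. u' r / u r) has_integral ln (u 1) - ln (u 0)) {0..1}"
    proof (rule fundamental_theorem_of_calculus)
      fix x :: real assume "x \<in> {0..1}"
      then have "((\<lambda>r. ln (u r)) has_real_derivative 1 / u x * u' x) (at x within {0..1})"
        using u_pos
        by (intro has_field_derivative_at_within[OF DERIV_chain2[OF DERIV_ln_divide u']])
      then show "((\<lambda>r. ln (u r)) has_vector_derivative u' x / u x) (at x within {0..1})"
        by (simp add: has_real_derivative_iff_has_vector_derivative)
    qed simp
    moreover have "ln (u 1) - ln (u 0) = I"
      using \<open>u 1 = exp I * u 0\<close> u_pos[of 0] by (simp add: ln_mult)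
    ultimately show "((\<lambda>r. u' r / u r) has_integral I) {0..1}"
      by simp
  qed
qed

lemma is_sol_from_riccati:
  assumes "d > 0"
    and S': "\<And>r. r \<in> {0..1} \<Longrightarrow>
      (S has_real_derivative - (S r)\<^sup>2 - real d * lam) (at r within {0..1})"
    and v': "\<And>r. r \<in> {0..1} \<Longrightarrow> (v has_real_derivative - S r * v r) (at r within {0..1})"
    and v_pos: "\<And>r. r \<in> {0..1} \<Longrightarrow> v r > 0"
    and S_int: "(S has_integral (\<Sum>k<d. D k)) {0..1}"
  shows "\<exists>L. is_sol d lam D L"
proof -
  have "continuous_on {0..1} v"
    using DERIV_continuous_on[OF v'] .
  then obtain J where J: "(v has_integral J) {0..1}"
    using integrable_continuous_interval by blast
  have "J > 0"
    using has_integral_pos[OF _ \<open>continuous_on {0..1} v\<close> v_pos J] by simp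
  define B where "B i = (D i - (\<Sum>k<d. D k) / real d) / J" for i
  define L where "L i r = S r / real d + B i * v r" for i r
  have "(\<Sum>k<d. B k) = 0"
    using \<open>d > 0\<close> by (simp add: B_def sum_divide_distrib[symmetric] sum_subtractf)
  then have sum_L: "(\<Sum>k<d. L k r) = S r" for r
    using \<open>d > 0\<close> by (simp add: L_def sum.distrib sum_distrib_right[symmetric])
  have L': "(L i has_real_derivative - S r * L i r - lam) (at r within {0..1})"
    if "r \<in> {0..1}" for i r
  proof -
    have "(L i has_real_derivative (- (S r)\<^sup>2 - real d * lam) / real d + B i * (- S r * v r))
        (at r within {0..1})"
      unfolding L_def[abs_def] using S'[OF that] v'[OF that]
      by (intro DERIV_add DERIV_cdivide DERIV_cmult)
    then show ?thesis
      using \<open>d > 0\<close> by (simp add: L_def field_simps power2_eq_square)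
  qed
  have "is_sol d lam D L"
    unfolding is_sol_def sum_L
  proof (intro allI impI conjI ballI)
    fix i assume "i < d"
    have "continuous_on {0..1} (\<lambda>r. - S r * L i r - lam)"
      using DERIV_continuous_on[OF S'] DERIV_continuous_on[OF L'] by (intro continuous_intros)
    then show "C1_01 (L i)"
      unfolding C1_01_def using L' by blast
    show "(L i has_real_derivative - S r * L i r - lam) (at r within {0..1})"
      if "r \<in> {0..1}" for r
      using L'[OF that] .
    have "(L i has_integral (\<Sum>k<d. D k) / real d + B i * J) {0..1}"
      unfolding L_def[abs_def] using S_int J
      by (intro has_integral_add has_integral_divide has_integral_mult_right)
    then show "(L i has_integral D i) {0..1}"
      using \<open>J > 0\<close> by (simp add: B_def)
  qed
  then show ?thesis
    by blast
qed

theorem lemma3p2: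
  fixes d :: nat and lam :: real and D :: "nat \<Rightarrow> real"
  assumes "d \<ge> 2"
  shows "((\<exists>L. is_sol d lam D L) \<longleftrightarrow> lam < pi\<^sup>2 / real d) \<and>
         (\<forall>L1 L2. is_sol d lam D L1 \<and> is_sol d lam D L2 \<longrightarrow>
            (\<forall>i<d. \<forall>r\<in>{0..1}. L1 i r = L2 i r))"
proof -
  have "d > 0"
    using assms by simp
  then have lam_iff: "lam < pi\<^sup>2 / real d \<longleftrightarrow> real d * lam < pi\<^sup>2"
    by (simp add: pos_less_divide_eq mult.commute)
  have "\<exists>L. is_sol d lam D L" if lam: "real d * lam < pi\<^sup>2"
  proof -
    obtain S v where "\<And>r. r \<in> {0..1} \<Longrightarrow>
        (S has_real_derivative - (S r)\<^sup>2 - real d * lam) (at r within {0..1})"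
      and "\<And>r. r \<in> {0..1} \<Longrightarrow> (v has_real_derivative - S r * v r) (at r within {0..1})"
      and "\<And>r. r \<in> {0..1} \<Longrightarrow> v r > 0" and "(S has_integral (\<Sum>k<d. D k)) {0..1}"
      using riccati_solution_with_integral[OF lam] by blast
    then show ?thesis
      using is_sol_from_riccati[OF \<open>d > 0\<close>] by blast
  qed
  then show ?thesis
    using lam_iff is_sol_imp_less_pi_squared is_sol_unique by blast
qed

end
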